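(* Under the hypotheses of Proposition 3 (two-system setup with a steady-state map $x_2^s$ defined on all of $\mathbb{R}^{n_1}$; $f_1,f_2$ globally Lipschitz; symmetric positive definite $P_1,Q_1,P_2,Q_2$ with $P_1\nabla_{x_1}f_1^r(x_1)+\nabla_{x_1}f_1^r(x_1)^TP_1\preceq -Q_1$ and $P_2\nabla_{x_2}f_2(x_1,x_2)+\nabla_{x_2}f_2(x_1,x_2)^TP_2\preceq -Q_2$ for all $x_1,x_2$), for $\theta>0$ define $$V(x_1,x_2)=\|f_1^r(x_1)\|_{P_1}^2+\theta\,\|f_2(x_1,x_2)\|_{P_2}^2 .$$ Then there exists $\nu>0$, independent of $\theta$, such that for every $\theta>0$ and all $(x_1,x_2)$, the derivative of $V$ along the predictive-sensitivity vector field satisfies $$\dot V(x_1,x_2)\le -\begin{bmatrix}\|f_2(x_1,x_2)\|_{P_2}\\ \|f_1^r(x_1)\|_{P_1}\end{bmatrix}^T\begin{bmatrix}\frac{\theta\lambda_{\min}(Q_2)}{\|P_2\|_2} & -\nu\\ -\nu & \frac{\lambda_{\min}(Q_1)}{\|P_1\|_2}\end{bmatrix}\begin{bmatrix}\|f_2(x_1,x_2)\|_{P_2}\\ \|f_1^r(x_1)\|_{P_1}\end{bmatrix}.$$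
   Context: Two-system setup: Let $f_1:\mathbb{R}^{n_1}\times\mathbb{R}^{n_2}\to\mathbb{R}^{n_1}$ and $f_2:\mathbb{R}^{n_1}\times\mathbb{R}^{n_2}\to\mathbb{R}^{n_2}$ be continuously differentiable, and assume $\nabla_{x_2}f_2(x_1,x_2)$ is invertible for all $(x_1,x_2)$. Define the extended sensitivity $S_{x_1}^{x_2}(x_1,x_2):=-\nabla_{x_2}f_2(x_1,x_2)^{-1}\nabla_{x_1}f_2(x_1,x_2)\in\mathbb{R}^{n_2\times n_1}$. The predictive-sensitivity system is $\dot x_1=f_1(x_1,x_2)$, $\dot x_2=f_2(x_1,x_2)+S_{x_1}^{x_2}(x_1,x_2)f_1(x_1,x_2)$; it is assumed that this right-hand side is locally Lipschitz continuous. A steady-state map is a continuously differentiable map $x_2^s$ with $f_2(x_1,x_2^s(x_1))=0$. The reduced vector field is $f_1^r(x_1):=f_1(x_1,x_2^s(x_1))$, with Jacobian $\nabla_{x_1}f_1^r(x_1)=\nabla_{x_1}f_1(x_1,x_2^s(x_1))+\nabla_{x_2}f_1(x_1,x_2^s(x_1))\nabla_{x_1}x_2^s(x_1)$. $\|x\|_P^2=x^TPx$, $\|P\|_2=\lambda_{\max}(P)$, $\lambda_{\min}$ the smallest eigenvalue. $\dot V=\nabla V^T F$ where $F$ is the predictive-sensitivity vector field. *)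

theory Defs
  imports "HOL-Analysis.Analysis"
begin

definition pnorm :: "real^'n^'n \<Rightarrow> real^'n \<Rightarrow> real" where
  "pnorm P x = sqrt (x \<bullet> (P *v x))"

text \<open>Real eigenvalues of a square matrix (for symmetric matrices these are all eigenvalues).\<close>
definition eigenvalues :: "real^'n^'n \<Rightarrow> real set" where
  "eigenvalues A = {l. \<exists>v. v \<noteq> 0 \<and> A *v v = l *\<^sub>R v}"

definition lambda_min :: "real^'n^'n \<Rightarrow> real" where
  "lambda_min A = Min (eigenvalues A)"

definition lambda_max :: "real^'n^'n \<Rightarrow> real" where
  "lambda_max A = Max (eigenvalues A)"

text \<open>Spectral norm of a symmetric positive definite matrix, as in the paper: its largest eigenvalue.\<close>
definition norm2_spd :: "real^'n^'n \<Rightarrow> real" where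
  "norm2_spd P = lambda_max P"

definition sym_pos_def :: "real^'n^'n \<Rightarrow> bool" where
  "sym_pos_def P \<longleftrightarrow> transpose P = P \<and> (\<forall>x. x \<noteq> 0 \<longrightarrow> 0 < x \<bullet> (P *v x))"

definition loewner_le :: "real^'n^'n \<Rightarrow> real^'n^'n \<Rightarrow> bool" where
  "loewner_le A B \<longleftrightarrow> (\<forall>v. v \<bullet> (A *v v) \<le> v \<bullet> (B *v v))"

end

theory Submission
  imports Defs
begin

text \<open>
  Along the predictive-sensitivity field the sensitivity term cancels the \<open>x\<^sub>1\<close>-drift
  of \<open>f\<^sub>2\<close>, so \<open>f\<^sub>2\<close> evolves by its own Jacobian \<open>\<nabla>\<^sub>x\<^sub>2f\<^sub>2\<close> and the second
  LMI makes the \<open>\<theta>\<close>-weighted term decay. The reduced field \<open>f\<^sub>1\<^sup>r\<close> evolves by its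
  Jacobian applied to \<open>f\<^sub>1(x\<^sub>1,x\<^sub>2)\<close> rather than to \<open>f\<^sub>1\<^sup>r(x\<^sub>1)\<close>; the first LMI handles
  the latter, and the mismatch is at most \<open>L\<^sub>1 |x\<^sub>2 - x\<^sub>2\<^sup>s(x\<^sub>1)|\<close>. The second LMI
  also makes \<open>f\<^sub>2(x\<^sub>1,\<cdot>)\<close> strongly monotone in the \<open>P\<^sub>2\<close>-inner product, so
  \<open>|x\<^sub>2 - x\<^sub>2\<^sup>s(x\<^sub>1)| \<le> \<kappa> |f\<^sub>2(x\<^sub>1,x\<^sub>2)|\<close>, and the same argument applied to
  \<open>\<nabla>\<^sub>x\<^sub>2f\<^sub>2\<close> bounds \<open>\<nabla>x\<^sub>2\<^sup>s\<close>. The resulting cross term \<open>2\<nu>ab\<close> involves only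
  Lipschitz constants and the matrices \<open>P\<^sub>i, Q\<^sub>i\<close>, never \<open>\<theta>\<close>.
\<close>

lemma matrix_vector_mult_uminus_left: "(- A) *v x = - (A *v x)"
  for A :: "'a::ring_1^'n^'m"
  by (simp add: matrix_vector_mult_def vec_eq_iff sum_negf)

lemma matrix_vector_mult_uminus_right: "A *v (- x) = - (A *v x)"
  for A :: "'a::ring_1^'n^'m"
  by (simp add: matrix_vector_mult_def vec_eq_iff sum_negf)

lemma inner_transpose_matrix_vector: "x \<bullet> (transpose A *v y) = (A *v x) \<bullet> y"
  for A :: "real^'n^'m"
  by (metis dot_lmul_matrix vector_transpose_matrix)

lemma inner_symmetric_matrix_vector:
  "transpose P = P \<Longrightarrow> x \<bullet> (P *v y) = y \<bullet> (P *v x)"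
  for P :: "real^'n^'n"
  by (metis inner_transpose_matrix_vector inner_commute)

lemma lyapunov_quadratic_form:
  fixes P J :: "real^'n^'n"
  assumes "transpose P = P"
  shows "v \<bullet> ((P ** J + transpose J ** P) *v v) = 2 * (v \<bullet> (P *v (J *v v)))"
proof -
  have "v \<bullet> ((transpose J ** P) *v v) = (J *v v) \<bullet> (P *v v)"
    by (metis matrix_vector_mul_assoc inner_transpose_matrix_vector)
  also have "\<dots> = v \<bullet> (P *v (J *v v))"
    by (metis assms inner_symmetric_matrix_vector)
  finally show ?thesis
    by (simp add: matrix_vector_mult_add_rdistrib inner_add_right flip: matrix_vector_mul_assoc)
qed

lemma psd_symmetric_quadratic_zero_imp_kernel:
  fixes B :: "real^'n^'n"
  assumes sym: "transpose B = B" and psd: "\<And>x. 0 \<le> x \<bullet> (B *v x)"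
    and zero: "v \<bullet> (B *v v) = 0"
  shows "B *v v = 0"
proof -
  define w where "w = B *v v"
  define c where "c = w \<bullet> w"
  define d where "d = w \<bullet> (B *v w)"
  have "0 \<le> d" by (simp add: d_def psd)
  have expand: "(v + t *\<^sub>R w) \<bullet> (B *v (v + t *\<^sub>R w)) = 2 * t * c + t\<^sup>2 * d" for t
  proof -
    have "v \<bullet> (B *v w) = w \<bullet> (B *v v)"
      by (rule inner_symmetric_matrix_vector[OF sym])
    then show ?thesis
      using zero by (simp add: matrix_vector_right_distrib matrix_vector_mult_scaleR
          inner_add_left inner_add_right c_def d_def w_def power2_eq_square algebra_simps)
  qed
  \<comment> \<open>Along the line through \<open>v\<close> in direction \<open>B v\<close> the form dips below zero unless \<open>B v = 0\<close>.\<close>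
  have "0 \<le> 2 * (- c / (d + 1)) * c + (- c / (d + 1))\<^sup>2 * d"
    using psd[of "v + (- c / (d + 1)) *\<^sub>R w"] by (simp only: expand)
  also have "\<dots> = - (c\<^sup>2 * (d + 2)) / (d + 1)\<^sup>2"
    using \<open>0 \<le> d\<close> by (simp add: field_simps power2_eq_square add_nonneg_eq_0_iff)
  finally have "0 \<le> - (c\<^sup>2 * (d + 2)) / (d + 1)\<^sup>2" .
  then have "c\<^sup>2 * (d + 2) \<le> 0"
    using \<open>0 \<le> d\<close> by (simp add: divide_le_0_iff)
  then have "c = 0"
    using \<open>0 \<le> d\<close> by (simp add: mult_le_0_iff)
  then show ?thesis by (simp add: c_def w_def)
qed

lemma symmetric_matrix_min_eigenpair:
  fixes A :: "real^'n^'n"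
  assumes sym: "transpose A = A"
  obtains m v where "v \<noteq> 0" "A *v v = m *\<^sub>R v" "\<And>x. m * (norm x)\<^sup>2 \<le> x \<bullet> (A *v x)"
proof -
  let ?q = "\<lambda>x::real^'n. x \<bullet> (A *v x)"
  have "continuous_on (sphere 0 1) ?q" by (intro continuous_intros)
  then obtain v where v: "v \<in> sphere 0 1" and vmin: "\<And>y. y \<in> sphere 0 1 \<Longrightarrow> ?q v \<le> ?q y"
    using continuous_attains_inf[of "sphere (0::real^'n) 1" ?q] by auto
  define m where "m = ?q v"
  have rayleigh: "m * (norm x)\<^sup>2 \<le> ?q x" for x
  proof (cases "x = 0")
    case False
    then have "(1 / norm x) *\<^sub>R x \<in> sphere 0 1" by simp
    then have "m \<le> ?q ((1 / norm x) *\<^sub>R x)"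
      using vmin m_def by blast
    also have "\<dots> = ?q x / (norm x)\<^sup>2"
      by (simp add: matrix_vector_mult_scaleR power2_eq_square)
    finally show ?thesis using False by (simp add: field_simps)
  qed simp
  define B where "B = A - m *\<^sub>R mat 1"
  have Bv: "B *v x = A *v x - m *\<^sub>R x" for x
    by (simp add: B_def matrix_vector_mult_diff_rdistrib flip: scaleR_matrix_vector_assoc)
  have "transpose B = B"
    using sym by (simp add: B_def transpose_def vec_eq_iff mat_def)
  moreover have "0 \<le> x \<bullet> (B *v x)" for x
    using rayleigh[of x] by (simp add: Bv inner_diff_right power2_norm_eq_inner)
  moreover have "v \<bullet> (B *v v) = 0"
    using v by (simp add: Bv inner_diff_right m_def flip: power2_norm_eq_inner)
  ultimately have "B *v v = 0"
    by (rule psd_symmetric_quadratic_zero_imp_kernel)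
  then have "A *v v = m *\<^sub>R v" by (simp add: Bv)
  moreover have "v \<noteq> 0" using v by auto
  ultimately show ?thesis using rayleigh that by blast
qed

lemma finite_eigenvalues_symmetric:
  fixes A :: "real^'n^'n"
  assumes sym: "transpose A = A"
  shows "finite (eigenvalues A)"
proof -
  let ?E = "eigenvalues A"
  define ev where "ev l = (SOME v. v \<noteq> 0 \<and> A *v v = l *\<^sub>R v)" for l
  have ev: "ev l \<noteq> 0 \<and> A *v ev l = l *\<^sub>R ev l" if "l \<in> ?E" for l
    using that unfolding ev_def eigenvalues_def by (metis (mono_tags, lifting) mem_Collect_eq someI_ex)
  have "inj_on ev ?E"
  proof (rule inj_onI)
    fix l l' assume l: "l \<in> ?E" "l' \<in> ?E" "ev l = ev l'"
    then have "l *\<^sub>R ev l = l' *\<^sub>R ev l" using ev by metis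
    then show "l = l'" using ev[OF l(1)] by (simp add: scaleR_cancel_right)
  qed
  moreover have "pairwise orthogonal (ev ` ?E)"
  proof (clarsimp simp: pairwise_def)
    fix l l' assume l: "l \<in> ?E" "l' \<in> ?E" "ev l \<noteq> ev l'"
    then have "l \<noteq> l'" by auto
    have "l * (ev l \<bullet> ev l') = (A *v ev l) \<bullet> ev l'" using ev[OF l(1)] by simp
    also have "\<dots> = ev l \<bullet> (A *v ev l')"
      using inner_symmetric_matrix_vector[OF sym] by (metis inner_commute)
    also have "\<dots> = l' * (ev l \<bullet> ev l')" using ev[OF l(2)] by simp
    finally show "orthogonal (ev l) (ev l')" using \<open>l \<noteq> l'\<close> by (simp add: orthogonal_def)
  qed
  moreover have "0 \<notin> ev ` ?E" using ev by auto
  ultimately show ?thesis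
    by (metis pairwise_orthogonal_independent independent_bound finite_imageD)
qed

lemma lambda_min_symmetric:
  fixes A :: "real^'n^'n"
  assumes sym: "transpose A = A"
  shows "lambda_min A \<in> eigenvalues A" "lambda_min A * (norm x)\<^sup>2 \<le> x \<bullet> (A *v x)"
proof -
  obtain m v where v: "v \<noteq> 0" "A *v v = m *\<^sub>R v"
    and rayleigh: "\<And>x. m * (norm x)\<^sup>2 \<le> x \<bullet> (A *v x)"
    using symmetric_matrix_min_eigenpair[OF sym] by blast
  have "m \<in> eigenvalues A" unfolding eigenvalues_def using v by blast
  moreover have "m \<le> l" if "l \<in> eigenvalues A" for l
  proof -
    from that obtain w where "w \<noteq> 0" "A *v w = l *\<^sub>R w"
      unfolding eigenvalues_def by blast
    then have "m * (norm w)\<^sup>2 \<le> l * (norm w)\<^sup>2"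
      using rayleigh[of w] by (simp add: power2_norm_eq_inner)
    then show ?thesis using \<open>w \<noteq> 0\<close> by simp
  qed
  ultimately have "lambda_min A = m"
    unfolding lambda_min_def using finite_eigenvalues_symmetric[OF sym] by (intro Min_eqI) auto
  then show "lambda_min A \<in> eigenvalues A" "lambda_min A * (norm x)\<^sup>2 \<le> x \<bullet> (A *v x)"
    using \<open>m \<in> eigenvalues A\<close> rayleigh by auto
qed

lemma quadratic_le_lambda_max:
  fixes A :: "real^'n^'n"
  assumes sym: "transpose A = A"
  shows "x \<bullet> (A *v x) \<le> lambda_max A * (norm x)\<^sup>2"
proof -
  have "transpose (- A) = - A" using sym by (simp add: transpose_def vec_eq_iff)
  then obtain m v where v: "v \<noteq> 0" "(- A) *v v = m *\<^sub>R v"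
    and rayleigh: "\<And>x. m * (norm x)\<^sup>2 \<le> x \<bullet> ((- A) *v x)"
    using symmetric_matrix_min_eigenpair by blast
  have "A *v v = (- m) *\<^sub>R v"
    by (metis v(2) matrix_vector_mult_uminus_left minus_minus scaleR_minus_left)
  then have "- m \<in> eigenvalues A" unfolding eigenvalues_def using v(1) by blast
  then have "- m \<le> lambda_max A"
    unfolding lambda_max_def using finite_eigenvalues_symmetric[OF sym] by simp
  then have "- m * (norm x)\<^sup>2 \<le> lambda_max A * (norm x)\<^sup>2"
    by (rule mult_right_mono) simp
  moreover have "x \<bullet> (A *v x) \<le> - m * (norm x)\<^sup>2"
    using rayleigh[of x] by (simp add: matrix_vector_mult_uminus_left)
  ultimately show ?thesis by linarith
qed

lemma sym_pos_def_symmetric: "sym_pos_def P \<Longrightarrow> transpose P = P"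
  by (simp add: sym_pos_def_def)

lemma sym_pos_def_lambda_min_pos:
  assumes "sym_pos_def P"
  shows "0 < lambda_min P"
proof -
  note sym = sym_pos_def_symmetric[OF assms]
  obtain v where v: "v \<noteq> 0" "P *v v = lambda_min P *\<^sub>R v"
    using lambda_min_symmetric(1)[OF sym] unfolding eigenvalues_def by blast
  then have "0 < lambda_min P * (v \<bullet> v)"
    using assms unfolding sym_pos_def_def by auto
  moreover have "0 < v \<bullet> v" using v(1) by simp
  ultimately show ?thesis by (simp add: zero_less_mult_iff)
qed

lemma norm2_spd_pos:
  assumes "sym_pos_def P"
  shows "0 < norm2_spd P"
proof -
  note sym = sym_pos_def_symmetric[OF assms]
  then have "lambda_min P \<le> lambda_max P"
    unfolding lambda_max_def
    by (intro Max_ge finite_eigenvalues_symmetric lambda_min_symmetric(1))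
  then show ?thesis
    using sym_pos_def_lambda_min_pos[OF assms] by (simp add: norm2_spd_def)
qed

lemma pnorm_square:
  assumes "sym_pos_def P"
  shows "(pnorm P x)\<^sup>2 = x \<bullet> (P *v x)"
proof -
  have "0 \<le> x \<bullet> (P *v x)"
    using assms unfolding sym_pos_def_def by (cases "x = 0") (auto intro: less_imp_le)
  then show ?thesis by (simp add: pnorm_def)
qed

text \<open>Isabelle's \<open>sqrt\<close> is odd on negative arguments, so nonnegativity of \<open>pnorm\<close>
  needs a positive form.\<close>

lemma pnorm_nonneg: "sym_pos_def P \<Longrightarrow> 0 \<le> pnorm P x"
  by (metis pnorm_square pnorm_def real_sqrt_ge_zero zero_le_power2)

lemma pnorm_lower_bound:
  assumes "sym_pos_def P"
  shows "sqrt (lambda_min P) * norm x \<le> pnorm P x"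
proof -
  have "lambda_min P * (norm x)\<^sup>2 \<le> (pnorm P x)\<^sup>2"
    using lambda_min_symmetric(2)[OF sym_pos_def_symmetric[OF assms]]
    by (simp add: pnorm_square[OF assms])
  then have "sqrt (lambda_min P * (norm x)\<^sup>2) \<le> pnorm P x"
    using pnorm_nonneg[OF assms] real_le_lsqrt by blast
  then show ?thesis by (simp add: real_sqrt_mult)
qed

lemma quadratic_ge_pnorm_square:
  assumes P: "sym_pos_def P" and Q: "sym_pos_def Q"
  shows "lambda_min Q / norm2_spd P * (pnorm P x)\<^sup>2 \<le> x \<bullet> (Q *v x)"
proof -
  have "(pnorm P x)\<^sup>2 \<le> norm2_spd P * (norm x)\<^sup>2"
    using quadratic_le_lambda_max[OF sym_pos_def_symmetric[OF P]]
    by (simp add: pnorm_square[OF P] norm2_spd_def)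
  then have "lambda_min Q / norm2_spd P * (pnorm P x)\<^sup>2 \<le> lambda_min Q * (norm x)\<^sup>2"
    using sym_pos_def_lambda_min_pos[OF Q] norm2_spd_pos[OF P] by (simp add: field_simps)
  also have "\<dots> \<le> x \<bullet> (Q *v x)"
    by (rule lambda_min_symmetric(2)[OF sym_pos_def_symmetric[OF Q]])
  finally show ?thesis .
qed

lemma lyapunov_inequality:
  fixes P Q J :: "real^'n^'n"
  assumes "transpose P = P" and "loewner_le (P ** J + transpose J ** P) (- Q)"
  shows "2 * (v \<bullet> (P *v (J *v v))) \<le> - (v \<bullet> (Q *v v))"
  using assms lyapunov_quadratic_form unfolding loewner_le_def
  by (metis matrix_vector_mult_uminus_left inner_minus_right)

lemma lyapunov_strongly_monotone:
  fixes g :: "real^'n \<Rightarrow> real^'n" and G :: "real^'n \<Rightarrow> real^'n^'n" and P Q :: "real^'n^'n"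
  assumes g: "\<And>y. (g has_derivative (\<lambda>h. G y *v h)) (at y)"
    and P: "transpose P = P" and Q: "transpose Q = Q"
    and lmi: "\<And>y. loewner_le (P ** G y + transpose (G y) ** P) (- Q)"
  shows "(y1 - y0) \<bullet> (P *v (g y1 - g y0)) \<le> - (lambda_min Q / 2 * (norm (y1 - y0))\<^sup>2)"
proof -
  define d where "d = y1 - y0"
  define c where "c = lambda_min Q / 2 * (norm d)\<^sup>2"
  define h where "h t = d \<bullet> (P *v g (y0 + t *\<^sub>R d)) + c * t" for t
  have "(h has_real_derivative d \<bullet> (P *v (G (y0 + t *\<^sub>R d) *v d)) + c) (at t)" for t
  proof -
    have "((\<lambda>t. g (y0 + t *\<^sub>R d)) has_derivative (\<lambda>s. G (y0 + t *\<^sub>R d) *v (s *\<^sub>R d))) (at t)"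
      by (rule has_derivative_compose[OF _ g]) (auto intro!: derivative_eq_intros)
    from bounded_linear.has_derivative[OF bounded_linear_inner_right
        bounded_linear.has_derivative[OF matrix_vector_mul_bounded_linear this]]
    have "((\<lambda>t. d \<bullet> (P *v g (y0 + t *\<^sub>R d))) has_derivative
        (\<lambda>s. d \<bullet> (P *v (G (y0 + t *\<^sub>R d) *v (s *\<^sub>R d))))) (at t)" .
    moreover have "((\<lambda>t. c * t) has_derivative (\<lambda>s. c * s)) (at t)"
      by (auto intro!: derivative_eq_intros)
    ultimately show ?thesis unfolding has_field_derivative_def h_def
      by (rule has_derivative_eq_rhs[OF has_derivative_add])
        (simp add: fun_eq_iff matrix_vector_mult_scaleR algebra_simps)
  qed
  moreover have "d \<bullet> (P *v (G y *v d)) + c \<le> 0" for y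
    using lyapunov_inequality[OF P lmi[of y], of d] lambda_min_symmetric(2)[OF Q, of d]
    by (simp add: c_def)
  ultimately have "h 1 \<le> h 0"
    using DERIV_nonpos_imp_nonincreasing[of 0 1 h] by fastforce
  then show ?thesis
    by (simp add: h_def d_def c_def matrix_vector_mult_diff_distrib inner_diff_right)
qed

lemma lyapunov_coercive:
  fixes g :: "real^'n \<Rightarrow> real^'n" and G :: "real^'n \<Rightarrow> real^'n^'n" and P Q :: "real^'n^'n"
  assumes g: "\<And>y. (g has_derivative (\<lambda>h. G y *v h)) (at y)"
    and P: "transpose P = P" and Q: "transpose Q = Q"
    and lmi: "\<And>y. loewner_le (P ** G y + transpose (G y) ** P) (- Q)"
  shows "lambda_min Q * norm (y1 - y0) \<le> 2 * onorm (\<lambda>x. P *v x) * norm (g y1 - g y0)"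
proof (cases "y1 = y0")
  case False
  have "lambda_min Q / 2 * (norm (y1 - y0))\<^sup>2 \<le> - ((y1 - y0) \<bullet> (P *v (g y1 - g y0)))"
    using lyapunov_strongly_monotone[OF g P Q lmi, of y1 y0] by linarith
  also have "\<dots> \<le> norm (y1 - y0) * norm (P *v (g y1 - g y0))"
    using Cauchy_Schwarz_ineq2 by (metis abs_le_iff minus_le_iff)
  also have "\<dots> \<le> norm (y1 - y0) * (onorm (\<lambda>x. P *v x) * norm (g y1 - g y0))"
    by (simp add: mult_left_mono onorm matrix_vector_mul_bounded_linear)
  finally show ?thesis
    using False by (simp add: power2_eq_square field_simps)
qed simp

lemma lyapunov_matrix_coercive:
  fixes P Q J :: "real^'n^'n"
  assumes "transpose P = P" and "transpose Q = Q"
    and "loewner_le (P ** J + transpose J ** P) (- Q)"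
  shows "lambda_min Q * norm w \<le> 2 * onorm (\<lambda>x. P *v x) * norm (J *v w)"
  using lyapunov_coercive[of "\<lambda>y. J *v y" "\<lambda>_. J" P Q w 0] assms
  by (simp add: bounded_linear_imp_has_derivative matrix_vector_mul_bounded_linear)

lemma lipschitz_on_has_derivative_bound:
  fixes f :: "'a::real_normed_vector \<Rightarrow> 'b::real_normed_vector"
  assumes L: "L-lipschitz_on UNIV f" and f': "(f has_derivative f') (at x)"
  shows "norm (f' h) \<le> L * norm h"
proof -
  let ?g = "\<lambda>t::real. f (x + t *\<^sub>R h)"
  have "((\<lambda>t. x + t *\<^sub>R h) has_derivative (\<lambda>t. t *\<^sub>R h)) (at 0)"
    by (auto intro!: derivative_eq_intros)
  then have "(?g has_derivative (\<lambda>t. f' (t *\<^sub>R h))) (at 0)"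
    using has_derivative_compose[of "\<lambda>t. x + t *\<^sub>R h" _ 0 UNIV f f'] f' by simp
  then have g': "(?g has_derivative (\<lambda>t. t *\<^sub>R f' h)) (at 0)"
    using linear_scale[OF has_derivative_linear[OF f']] by simp
  let ?err = "\<lambda>t. norm (?g t - ?g 0 - t *\<^sub>R f' h) / norm t"
  have "(?err \<longlongrightarrow> 0) (at 0)"
    using g' unfolding has_derivative_at by simp
  moreover have "\<forall>\<^sub>F t in at 0. norm (f' h) \<le> L * norm h + ?err t"
    unfolding eventually_at_filter
  proof (intro always_eventually allI impI)
    fix t :: real assume "t \<noteq> 0"
    have "\<bar>t\<bar> * norm (f' h) \<le> norm (?g t - ?g 0) + norm (?g t - ?g 0 - t *\<^sub>R f' h)"
      using norm_triangle_ineq4[of "?g t - ?g 0" "?g t - ?g 0 - t *\<^sub>R f' h"] by simp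
    also have "norm (?g t - ?g 0) \<le> L * (\<bar>t\<bar> * norm h)"
      using lipschitz_onD[OF L, of "x + t *\<^sub>R h" x] by (simp add: dist_norm)
    finally show "norm (f' h) \<le> L * norm h + ?err t"
      using \<open>t \<noteq> 0\<close> by (simp add: field_simps)
  qed
  ultimately have "norm (f' h) \<le> L * norm h + 0"
    by (rule tendsto_le[OF at_neq_bot tendsto_add[OF tendsto_const] tendsto_const])
  then show ?thesis by simp
qed

lemma has_derivative_quadratic_form:
  fixes P :: "real^'n^'n" and f :: "'a::real_normed_vector \<Rightarrow> real^'n"
  assumes "transpose P = P" and "(f has_derivative f') (at x)"
  shows "((\<lambda>p. f p \<bullet> (P *v f p)) has_derivative (\<lambda>h. 2 * (f x \<bullet> (P *v f' h)))) (at x)"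
proof -
  have "((\<lambda>p. f p \<bullet> (P *v f p)) has_derivative
      (\<lambda>h. f x \<bullet> (P *v f' h) + f' h \<bullet> (P *v f x))) (at x)"
    by (intro has_derivative_inner assms(2)
        bounded_linear.has_derivative[OF matrix_vector_mul_bounded_linear])
  moreover have "f x \<bullet> (P *v f' h) + f' h \<bullet> (P *v f x) = 2 * (f x \<bullet> (P *v f' h))" for h
    using inner_symmetric_matrix_vector[OF assms(1), of "f' h" "f x"] by simp
  ultimately show ?thesis by simp
qed

lemma sensitivity_cancels_drift:
  fixes A :: "real^'m^'n" and B :: "real^'n^'n"
  assumes "invertible B"
  shows "A *v w + B *v (v + ((- matrix_inv B) ** A) *v w) = B *v v"
proof -
  have "B ** matrix_inv B = mat 1"
    using assms unfolding invertible_def matrix_inv_def by (rule someI2_ex) auto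
  moreover have "B *v (((- matrix_inv B) ** A) *v w) = - ((B ** matrix_inv B) *v (A *v w))"
    by (simp add: matrix_vector_mult_uminus_left matrix_vector_mult_uminus_right
        flip: matrix_vector_mul_assoc)
  ultimately have "B *v (((- matrix_inv B) ** A) *v w) = - (A *v w)"
    by simp
  then show ?thesis by (simp add: matrix_vector_right_distrib)
qed

locale predictive_sensitivity_setting =
  fixes f1 :: "real^'n1 \<Rightarrow> real^'n2 \<Rightarrow> real^'n1"
    and f2 :: "real^'n1 \<Rightarrow> real^'n2 \<Rightarrow> real^'n2"
    and J11 :: "real^'n1 \<Rightarrow> real^'n2 \<Rightarrow> real^'n1^'n1"
    and J12 :: "real^'n1 \<Rightarrow> real^'n2 \<Rightarrow> real^'n2^'n1"
    and J21 :: "real^'n1 \<Rightarrow> real^'n2 \<Rightarrow> real^'n1^'n2"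
    and J22 :: "real^'n1 \<Rightarrow> real^'n2 \<Rightarrow> real^'n2^'n2"
    and xs :: "real^'n1 \<Rightarrow> real^'n2"
    and Dxs :: "real^'n1 \<Rightarrow> real^'n1^'n2"
    and P1 Q1 :: "real^'n1^'n1"
    and P2 Q2 :: "real^'n2^'n2"
    and L1 L2 :: real
  assumes f1_deriv: "\<And>x1 x2. ((\<lambda>p. f1 (fst p) (snd p)) has_derivative
              (\<lambda>h. J11 x1 x2 *v fst h + J12 x1 x2 *v snd h)) (at (x1, x2))"
    and f2_deriv: "\<And>x1 x2. ((\<lambda>p. f2 (fst p) (snd p)) has_derivative
              (\<lambda>h. J21 x1 x2 *v fst h + J22 x1 x2 *v snd h)) (at (x1, x2))"
    and J22_inv: "\<And>x1 x2. invertible (J22 x1 x2)"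
    and xs_deriv: "\<And>x1. (xs has_derivative (\<lambda>h. Dxs x1 *v h)) (at x1)"
    and xs_steady: "\<And>x1. f2 x1 (xs x1) = 0"
    and f1_lip: "L1-lipschitz_on UNIV (\<lambda>p. f1 (fst p) (snd p))"
    and f2_lip: "L2-lipschitz_on UNIV (\<lambda>p. f2 (fst p) (snd p))"
    and P1: "sym_pos_def P1" and Q1: "sym_pos_def Q1"
    and P2: "sym_pos_def P2" and Q2: "sym_pos_def Q2"
    and LMI1: "\<And>x1. loewner_le
              (P1 ** (J11 x1 (xs x1) + J12 x1 (xs x1) ** Dxs x1)
               + transpose (J11 x1 (xs x1) + J12 x1 (xs x1) ** Dxs x1) ** P1) (- Q1)"
    and LMI2: "\<And>x1 x2. loewner_le (P2 ** J22 x1 x2 + transpose (J22 x1 x2) ** P2) (- Q2)"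
begin

definition reduced_jacobian :: "real^'n1 \<Rightarrow> real^'n1^'n1" where
  "reduced_jacobian x1 = J11 x1 (xs x1) + J12 x1 (xs x1) ** Dxs x1"

definition kappa :: real where
  "kappa = 2 * onorm (\<lambda>x. P2 *v x) / lambda_min Q2"

lemma kappa_nonneg: "0 \<le> kappa"
  using sym_pos_def_lambda_min_pos[OF Q2]
  by (simp add: kappa_def onorm_pos_le matrix_vector_mul_bounded_linear)

lemma L1_nonneg: "0 \<le> L1" and L2_nonneg: "0 \<le> L2"
  using f1_lip f2_lip lipschitz_on_nonneg by blast+

lemma f2_partial_deriv: "(f2 x1 has_derivative (\<lambda>h. J22 x1 x2 *v h)) (at x2)"
proof -
  have "((\<lambda>y. (x1, y)) has_derivative (\<lambda>h. (0, h))) (at x2)"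
    by (auto intro!: derivative_eq_intros)
  from has_derivative_compose[OF this f2_deriv] show ?thesis by simp
qed

lemma le_kappa_multI: "lambda_min Q2 * n \<le> 2 * onorm (\<lambda>x. P2 *v x) * m \<Longrightarrow> n \<le> kappa * m"
  using sym_pos_def_lambda_min_pos[OF Q2] by (simp add: kappa_def field_simps)

lemma J22_coercive: "norm w \<le> kappa * norm (J22 x1 x2 *v w)"
  using LMI2 P2 Q2
  by (intro le_kappa_multI lyapunov_matrix_coercive) (auto simp: sym_pos_def_symmetric)

lemma steady_state_distance: "norm (x2 - xs x1) \<le> kappa * norm (f2 x1 x2)"
  using lyapunov_coercive[OF f2_partial_deriv[of x1] sym_pos_def_symmetric[OF P2]
      sym_pos_def_symmetric[OF Q2] LMI2[of x1], of x2 "xs x1"]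
  by (intro le_kappa_multI) (simp add: xs_steady)

lemma chain_rule_steady_state:
  assumes "\<And>x1 x2. ((\<lambda>p. g (fst p) (snd p)) has_derivative
              (\<lambda>h. A x1 x2 *v fst h + B x1 x2 *v snd h)) (at (x1, x2))"
  shows "((\<lambda>y. g y (xs y)) has_derivative
      (\<lambda>h. A a (xs a) *v h + B a (xs a) *v (Dxs a *v h))) (at a)"
proof -
  have "((\<lambda>y. (y, xs y)) has_derivative (\<lambda>h. (h, Dxs a *v h))) (at a)"
    by (intro has_derivative_Pair has_derivative_ident xs_deriv)
  from has_derivative_compose[OF this assms] show ?thesis by simp
qed

lemma steady_state_implicit_derivative:
  "J21 a (xs a) *v u + J22 a (xs a) *v (Dxs a *v u) = 0"
proof -
  have "((\<lambda>y. 0) has_derivative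
      (\<lambda>h. J21 a (xs a) *v h + J22 a (xs a) *v (Dxs a *v h))) (at a)"
    using chain_rule_steady_state[OF f2_deriv] by (simp add: xs_steady)
  then have "(\<lambda>h. J21 a (xs a) *v h + J22 a (xs a) *v (Dxs a *v h)) = (\<lambda>h. 0)"
    using has_derivative_unique has_derivative_const by blast
  then show ?thesis by metis
qed

lemma Dxs_bound: "norm (Dxs a *v u) \<le> kappa * L2 * norm u"
proof -
  have "norm (Dxs a *v u) \<le> kappa * norm (J21 a (xs a) *v u)"
    using J22_coercive[of "Dxs a *v u" a "xs a"] steady_state_implicit_derivative[of a u]
    by (simp add: add_eq_0_iff)
  also have "norm (J21 a (xs a) *v u) \<le> L2 * norm u"
    using lipschitz_on_has_derivative_bound[OF f2_lip f2_deriv, where h = "(u, 0)"] by (simp add: norm_Pair)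
  finally show ?thesis
    using kappa_nonneg by (simp add: mult_left_mono mult.assoc)
qed

lemma reduced_jacobian_bound:
  "norm (reduced_jacobian a *v u) \<le> L1 * (1 + kappa * L2) * norm u"
proof -
  have J11: "norm (J11 a (xs a) *v u) \<le> L1 * norm u"
    using lipschitz_on_has_derivative_bound[OF f1_lip f1_deriv, where h = "(u, 0)"] by (simp add: norm_Pair)
  have "norm (J12 a (xs a) *v (Dxs a *v u)) \<le> L1 * norm (Dxs a *v u)"
    using lipschitz_on_has_derivative_bound[OF f1_lip f1_deriv, where h = "(0, Dxs a *v u)"]
    by (simp add: norm_Pair)
  also have "\<dots> \<le> L1 * (kappa * L2 * norm u)"
    using Dxs_bound L1_nonneg by (rule mult_left_mono)
  finally have J12: "norm (J12 a (xs a) *v (Dxs a *v u)) \<le> L1 * (kappa * L2 * norm u)" .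
  have "norm (reduced_jacobian a *v u)
      \<le> norm (J11 a (xs a) *v u) + norm (J12 a (xs a) *v (Dxs a *v u))"
    by (simp add: reduced_jacobian_def matrix_vector_mult_add_rdistrib matrix_vector_mul_assoc
        norm_triangle_ineq)
  also have "\<dots> \<le> L1 * (1 + kappa * L2) * norm u"
    using J11 J12 by (simp add: algebra_simps)
  finally show ?thesis .
qed

lemma reduced_field_deriv:
  "((\<lambda>y. f1 y (xs y)) has_derivative (\<lambda>h. reduced_jacobian a *v h)) (at a)"
  using chain_rule_steady_state[OF f1_deriv, of a]
  by (simp add: reduced_jacobian_def matrix_vector_mult_add_rdistrib matrix_vector_mul_assoc)

lemma lyapunov_derivative_along_field:
  assumes "((\<lambda>p. (pnorm P1 (f1 (fst p) (xs (fst p))))\<^sup>2 + \<theta> * (pnorm P2 (f2 (fst p) (snd p)))\<^sup>2)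
      has_derivative D) (at (x1, x2))"
  shows "D (f1 x1 x2, f2 x1 x2 + ((- matrix_inv (J22 x1 x2)) ** J21 x1 x2) *v f1 x1 x2)
    = 2 * (f1 x1 (xs x1) \<bullet> (P1 *v (reduced_jacobian x1 *v f1 x1 x2)))
      + \<theta> * (2 * (f2 x1 x2 \<bullet> (P2 *v (J22 x1 x2 *v f2 x1 x2))))"
proof -
  have dz: "((\<lambda>p. f1 (fst p) (xs (fst p))) has_derivative (\<lambda>h. reduced_jacobian x1 *v fst h))
      (at (x1, x2))"
    using has_derivative_compose[OF has_derivative_fst[OF has_derivative_ident]
        reduced_field_deriv[of "fst (x1, x2)"]]
    by simp
  have "((\<lambda>p. f1 (fst p) (xs (fst p)) \<bullet> (P1 *v f1 (fst p) (xs (fst p)))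
        + \<theta> * (f2 (fst p) (snd p) \<bullet> (P2 *v f2 (fst p) (snd p)))) has_derivative
      (\<lambda>h. 2 * (f1 x1 (xs x1) \<bullet> (P1 *v (reduced_jacobian x1 *v fst h)))
        + \<theta> * (2 * (f2 x1 x2 \<bullet> (P2 *v (J21 x1 x2 *v fst h + J22 x1 x2 *v snd h))))))
      (at (x1, x2))"
    using has_derivative_add[OF has_derivative_quadratic_form[OF sym_pos_def_symmetric[OF P1] dz]
        has_derivative_mult_right[OF has_derivative_quadratic_form[OF sym_pos_def_symmetric[OF P2]
            f2_deriv]]]
    by simp
  then have "D = (\<lambda>h. 2 * (f1 x1 (xs x1) \<bullet> (P1 *v (reduced_jacobian x1 *v fst h)))
        + \<theta> * (2 * (f2 x1 x2 \<bullet> (P2 *v (J21 x1 x2 *v fst h + J22 x1 x2 *v snd h)))))"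
    using assms by (intro has_derivative_unique) (simp_all add: pnorm_square P1 P2)
  then show ?thesis
    by (simp add: sensitivity_cancels_drift[OF J22_inv])
qed

text \<open>The summand \<open>1\<close> only makes \<open>\<nu>\<close> strictly positive.\<close>

definition nu :: real where
  "nu = onorm (\<lambda>x. P1 *v x) * L1 * (1 + kappa * L2) * L1 * kappa
      / sqrt (lambda_min P1 * lambda_min P2) + 1"

lemma nu_pos: "0 < nu"
  using kappa_nonneg L1_nonneg L2_nonneg sym_pos_def_lambda_min_pos[OF P1]
    sym_pos_def_lambda_min_pos[OF P2]
  by (simp add: nu_def onorm_pos_le matrix_vector_mul_bounded_linear add_nonneg_pos)

lemma cross_term_bound:
  "f1 x1 (xs x1) \<bullet> (P1 *v (reduced_jacobian x1 *v (f1 x1 x2 - f1 x1 (xs x1))))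
    \<le> nu * pnorm P2 (f2 x1 x2) * pnorm P1 (f1 x1 (xs x1))"
proof -
  define z where "z = f1 x1 (xs x1)"
  define y where "y = f2 x1 x2"
  define \<mu> where "\<mu> = sqrt (lambda_min P1 * lambda_min P2)"
  define C where "C = onorm (\<lambda>x. P1 *v x) * L1 * (1 + kappa * L2)"
  have "0 \<le> C"
    using kappa_nonneg L1_nonneg L2_nonneg
    by (simp add: C_def onorm_pos_le matrix_vector_mul_bounded_linear)
  have "0 < \<mu>"
    using sym_pos_def_lambda_min_pos[OF P1] sym_pos_def_lambda_min_pos[OF P2] by (simp add: \<mu>_def)
  have "norm (f1 x1 x2 - z) \<le> L1 * norm (x2 - xs x1)"
    using lipschitz_onD[OF f1_lip, of "(x1, x2)" "(x1, xs x1)"]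
    by (simp add: z_def dist_norm dist_Pair_Pair)
  also have "\<dots> \<le> L1 * (kappa * norm y)"
    using steady_state_distance L1_nonneg by (simp add: y_def mult_left_mono)
  finally have gap: "norm (f1 x1 x2 - z) \<le> L1 * (kappa * norm y)" .
  have "z \<bullet> (P1 *v (reduced_jacobian x1 *v (f1 x1 x2 - z)))
      \<le> norm z * norm (P1 *v (reduced_jacobian x1 *v (f1 x1 x2 - z)))"
    using Cauchy_Schwarz_ineq2 abs_le_iff by blast
  also have "\<dots> \<le> norm z * (onorm (\<lambda>x. P1 *v x) * norm (reduced_jacobian x1 *v (f1 x1 x2 - z)))"
    by (simp add: mult_left_mono onorm matrix_vector_mul_bounded_linear)
  also have "\<dots> \<le> norm z * (C * norm (f1 x1 x2 - z))"
    using reduced_jacobian_bound[of x1 "f1 x1 x2 - z"]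
    by (simp add: C_def mult_left_mono mult.assoc onorm_pos_le matrix_vector_mul_bounded_linear)
  also have "\<dots> \<le> norm z * (C * (L1 * (kappa * norm y)))"
    using gap \<open>0 \<le> C\<close> by (simp add: mult_left_mono)
  also have "\<dots> = (C * L1 * kappa / \<mu>) * (sqrt (lambda_min P1) * norm z)
      * (sqrt (lambda_min P2) * norm y)"
    using \<open>0 < \<mu>\<close> sym_pos_def_lambda_min_pos[OF P1] sym_pos_def_lambda_min_pos[OF P2]
    by (simp add: \<mu>_def real_sqrt_mult)
  also have "\<dots> \<le> (C * L1 * kappa / \<mu>) * pnorm P1 z * pnorm P2 y"
    using \<open>0 \<le> C\<close> \<open>0 < \<mu>\<close> L1_nonneg kappa_nonneg
      sym_pos_def_lambda_min_pos[OF P1] sym_pos_def_lambda_min_pos[OF P2] pnorm_lower_bound[OF P1, of z]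
      pnorm_lower_bound[OF P2, of y]
    by (intro mult_mono) (auto simp: pnorm_nonneg P1 P2)
  also have "\<dots> \<le> nu * pnorm P2 y * pnorm P1 z"
    using pnorm_nonneg[OF P1, of z] pnorm_nonneg[OF P2, of y]
    by (simp add: nu_def C_def \<mu>_def algebra_simps mult_left_mono)
  finally show ?thesis by (simp add: z_def y_def)
qed

lemma lyapunov_derivative_bound:
  assumes "0 < \<theta>"
    and "((\<lambda>p. (pnorm P1 (f1 (fst p) (xs (fst p))))\<^sup>2 + \<theta> * (pnorm P2 (f2 (fst p) (snd p)))\<^sup>2)
      has_derivative D) (at (x1, x2))"
  shows "D (f1 x1 x2, f2 x1 x2 + ((- matrix_inv (J22 x1 x2)) ** J21 x1 x2) *v f1 x1 x2)
    \<le> - (let a = pnorm P2 (f2 x1 x2); b = pnorm P1 (f1 x1 (xs x1)) in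
          (\<theta> * lambda_min Q2 / norm2_spd P2) * a\<^sup>2 - 2 * nu * a * b
          + (lambda_min Q1 / norm2_spd P1) * b\<^sup>2)"
proof -
  define z where "z = f1 x1 (xs x1)"
  define y where "y = f2 x1 x2"
  have "2 * (z \<bullet> (P1 *v (reduced_jacobian x1 *v z)))
      \<le> - (lambda_min Q1 / norm2_spd P1 * (pnorm P1 z)\<^sup>2)"
    using lyapunov_inequality[OF sym_pos_def_symmetric[OF P1] LMI1[of x1], where v = z]
      quadratic_ge_pnorm_square[OF P1 Q1, of z]
    by (simp add: reduced_jacobian_def)
  moreover have "2 * (y \<bullet> (P2 *v (J22 x1 x2 *v y)))
      \<le> - (lambda_min Q2 / norm2_spd P2 * (pnorm P2 y)\<^sup>2)"
    using lyapunov_inequality[OF sym_pos_def_symmetric[OF P2] LMI2[of x1 x2], where v = y]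
      quadratic_ge_pnorm_square[OF P2 Q2, of y]
    by simp
  then have "\<theta> * (2 * (y \<bullet> (P2 *v (J22 x1 x2 *v y))))
      \<le> - (\<theta> * lambda_min Q2 / norm2_spd P2 * (pnorm P2 y)\<^sup>2)"
    using mult_left_mono[of _ _ \<theta>] \<open>0 < \<theta>\<close> by fastforce
  moreover have "z \<bullet> (P1 *v (reduced_jacobian x1 *v f1 x1 x2))
      = z \<bullet> (P1 *v (reduced_jacobian x1 *v z))
        + z \<bullet> (P1 *v (reduced_jacobian x1 *v (f1 x1 x2 - z)))"
    by (simp add: matrix_vector_mult_diff_distrib inner_diff_right)
  ultimately show ?thesis
    using lyapunov_derivative_along_field[OF assms(2)] cross_term_bound[of x1 x2]
    by (simp add: Let_def z_def y_def)
qed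

end

theorem lemma2:
  fixes f1 :: "real^'n1 \<Rightarrow> real^'n2 \<Rightarrow> real^'n1"
    and f2 :: "real^'n1 \<Rightarrow> real^'n2 \<Rightarrow> real^'n2"
    and J11 :: "real^'n1 \<Rightarrow> real^'n2 \<Rightarrow> real^'n1^'n1"
    and J12 :: "real^'n1 \<Rightarrow> real^'n2 \<Rightarrow> real^'n2^'n1"
    and J21 :: "real^'n1 \<Rightarrow> real^'n2 \<Rightarrow> real^'n1^'n2"
    and J22 :: "real^'n1 \<Rightarrow> real^'n2 \<Rightarrow> real^'n2^'n2"
    and xs :: "real^'n1 \<Rightarrow> real^'n2"
    and Dxs :: "real^'n1 \<Rightarrow> real^'n1^'n2"
    and P1 Q1 :: "real^'n1^'n1"
    and P2 Q2 :: "real^'n2^'n2"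
  assumes f1_deriv: "\<And>x1 x2. ((\<lambda>p. f1 (fst p) (snd p)) has_derivative
              (\<lambda>h. J11 x1 x2 *v fst h + J12 x1 x2 *v snd h)) (at (x1, x2))"
    and f2_deriv: "\<And>x1 x2. ((\<lambda>p. f2 (fst p) (snd p)) has_derivative
              (\<lambda>h. J21 x1 x2 *v fst h + J22 x1 x2 *v snd h)) (at (x1, x2))"
    and J_cont: "continuous_on UNIV (\<lambda>p. J11 (fst p) (snd p))"
                "continuous_on UNIV (\<lambda>p. J12 (fst p) (snd p))"
                "continuous_on UNIV (\<lambda>p. J21 (fst p) (snd p))"
                "continuous_on UNIV (\<lambda>p. J22 (fst p) (snd p))"
    and J22_inv: "\<And>x1 x2. invertible (J22 x1 x2)"
    and PS_loclip: "local_lipschitz UNIV UNIV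
              (\<lambda>(t::real) p. (f1 (fst p) (snd p),
                 f2 (fst p) (snd p) +
                 ((- matrix_inv (J22 (fst p) (snd p))) ** J21 (fst p) (snd p)) *v f1 (fst p) (snd p)))"
    and xs_deriv: "\<And>x1. (xs has_derivative (\<lambda>h. Dxs x1 *v h)) (at x1)"
    and Dxs_cont: "continuous_on UNIV Dxs"
    and xs_steady: "\<And>x1. f2 x1 (xs x1) = 0"
    and f1_lip: "\<exists>L. lipschitz_on L UNIV (\<lambda>p. f1 (fst p) (snd p))"
    and f2_lip: "\<exists>L. lipschitz_on L UNIV (\<lambda>p. f2 (fst p) (snd p))"
    and P1: "sym_pos_def P1" and Q1: "sym_pos_def Q1"
    and P2: "sym_pos_def P2" and Q2: "sym_pos_def Q2"
    and LMI1: "\<And>x1. loewner_le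
              (P1 ** (J11 x1 (xs x1) + J12 x1 (xs x1) ** Dxs x1)
               + transpose (J11 x1 (xs x1) + J12 x1 (xs x1) ** Dxs x1) ** P1) (- Q1)"
    and LMI2: "\<And>x1 x2. loewner_le (P2 ** J22 x1 x2 + transpose (J22 x1 x2) ** P2) (- Q2)"
  shows "\<exists>\<nu>>0. \<forall>\<theta>>0. \<forall>x1 x2 D.
           ((\<lambda>p. (pnorm P1 (f1 (fst p) (xs (fst p))))\<^sup>2 + \<theta> * (pnorm P2 (f2 (fst p) (snd p)))\<^sup>2)
              has_derivative D) (at (x1, x2)) \<longrightarrow>
           D (f1 x1 x2, f2 x1 x2 + ((- matrix_inv (J22 x1 x2)) ** J21 x1 x2) *v f1 x1 x2)
           \<le> - (let a = pnorm P2 (f2 x1 x2); b = pnorm P1 (f1 x1 (xs x1)) in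
                  (\<theta> * lambda_min Q2 / norm2_spd P2) * a\<^sup>2 - 2 * \<nu> * a * b
                  + (lambda_min Q1 / norm2_spd P1) * b\<^sup>2)"
proof -
  \<comment> \<open>Continuity of the Jacobians and local Lipschitz continuity of the field only
    serve existence of solutions; the estimate does not need them.\<close>
  obtain L1 L2 where
    L1: "L1-lipschitz_on UNIV (\<lambda>p. f1 (fst p) (snd p))" and
    L2: "L2-lipschitz_on UNIV (\<lambda>p. f2 (fst p) (snd p))"
    using f1_lip f2_lip by blast
  interpret predictive_sensitivity_setting f1 f2 J11 J12 J21 J22 xs Dxs P1 Q1 P2 Q2 L1 L2
    by unfold_locales (fact f1_deriv f2_deriv J22_inv xs_deriv xs_steady L1 L2 P1 Q1 P2 Q2 LMI1 LMI2)+
  show ?thesis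
    using nu_pos lyapunov_derivative_bound by blast
qed

end
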